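(* Let $n\ge1$ and, for $i=1,\dots,n$, let $c_i>0$, $m_i>0$, $d_i>0$, and let $a_i,\mu_i,b_i,\delta_i$ satisfy $0\le a_i<\mu_i<b_i$ and $0<\delta_i\le \frac{2(b_i-\mu_i)(\mu_i-a_i)}{b_i-a_i}$. Let $\mathcal{P}_{(\mu,\delta)}$ be the set of probability distributions $\mathbb{P}$ of random vectors $\vec D=(D_1,\dots,D_n)$ such that, for every $i$, $\mathbb{E}_{\mathbb{P}}[D_i]=\mu_i$, $\mathbb{E}_{\mathbb{P}}|D_i-\mu_i|=\delta_i$ and $\operatorname{supp}(D_i)\subseteq[a_i,b_i]$. For $\vec q=(q_1,\dots,q_n)$ let $$G(\vec q,\vec D)=\sum_{i=1}^n c_i\big(d_i(q_i-D_i)+(m_i+d_i)(D_i-q_i)^+\big).$$ Then, for every $\vec q$, the maximum $\max_{\mathbb{P}\in\mathcal{P}_{(\mu,\delta)}}\mathbb{E}_{\mathbb{P}}[G(\vec q,\vec D)]$ is attained by a distribution under which each $D_i$ has the three-point distribution with values $a_i,\mu_i,b_i$ and respective probabilities $$p_1^{(i)}=\frac{\delta_i}{2(\mu_i-a_i)},\quad p_2^{(i)}=1-\frac{\delta_i}{2(\mu_i-a_i)}-\frac{\delta_i}{2(b_i-\mu_i)},\quad p_3^{(i)}=\frac{\delta_i}{2(b_i-\mu_i)}.$$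
   Context: Here $x^+=\max(x,0)$. The parameters $c_i$, $m_i$ and $d_i$ are the purchase cost, mark-up and discount factor of item $i$, so its selling price is $c_i(1+m_i)$ and its salvage value is $c_i(1-d_i)$. *)

theory Defs
  imports "HOL-Probability.Probability"
begin

definition ambig_set ::
  "('n::finite \<Rightarrow> real) \<Rightarrow> ('n \<Rightarrow> real) \<Rightarrow> ('n \<Rightarrow> real) \<Rightarrow> ('n \<Rightarrow> real)
     \<Rightarrow> (real ^ 'n) measure set" where
  "ambig_set a mu b delta =
     {P. prob_space P \<and> sets P = sets borel \<and>
        (\<forall>i. integrable P (\<lambda>x. x $ i) \<and> (\<integral>x. x $ i \<partial>P) = mu i \<and>
             integrable P (\<lambda>x. \<bar>x $ i - mu i\<bar>) \<and> (\<integral>x. \<bar>x $ i - mu i\<bar> \<partial>P) = delta i \<and>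
             (AE x in P. a i \<le> x $ i \<and> x $ i \<le> b i))}"

definition Gcost ::
  "('n::finite \<Rightarrow> real) \<Rightarrow> ('n \<Rightarrow> real) \<Rightarrow> ('n \<Rightarrow> real) \<Rightarrow> real ^ 'n \<Rightarrow> real ^ 'n \<Rightarrow> real" where
  "Gcost c m d q D =
     (\<Sum>i\<in>UNIV. c i * (d i * (q $ i - D $ i) + (m i + d i) * max (D $ i - q $ i) 0))"

end

theory Submission
  imports Defs
begin

text \<open>The expected cost depends on the law of \<open>D\<close> only through the means \<open>E D\<^sub>i\<close>, which are
  fixed, and the expectations \<open>E (D\<^sub>i - q\<^sub>i)\<^sup>+\<close> of a convex function of a single coordinate.
  On \<open>[a, b]\<close> a convex \<open>f\<close> lies below its piecewise linear interpolant through \<open>a\<close>, \<open>\<mu>\<close>, \<open>b\<close>,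
  and this interpolant can be written as \<open>f \<mu> + \<alpha> (t - \<mu>) + \<beta> |t - \<mu>|\<close>. Its expectation is
  therefore the same for every admissible law, namely \<open>f \<mu> + \<beta> \<delta>\<close>, and it equals the expectation
  of \<open>f\<close> under the three-point law, which is supported where \<open>f\<close> and the interpolant agree.
  Any joint law with these marginals, e.g. the product law, is thus a maximiser.\<close>

lemma convex_on_max_diff_zero: "convex_on S (\<lambda>t::real. max (t - q) 0)"
  if "convex S"
proof (rule convex_onI[OF _ that])
  fix t x y :: real
  assume t: "0 < t" "t < 1"
  have "(1 - t) * (x - q) + t * (y - q) \<le> (1 - t) * max (x - q) 0 + t * max (y - q) 0"
    using t by (intro add_mono mult_left_mono) auto
  moreover have "0 \<le> (1 - t) * max (x - q) 0 + t * max (y - q) 0"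
    using t by simp
  moreover have "(1 - t) *\<^sub>R x + t *\<^sub>R y - q = (1 - t) * (x - q) + t * (y - q)"
    by (simp add: algebra_simps)
  ultimately show "max ((1 - t) *\<^sub>R x + t *\<^sub>R y - q) 0 \<le> (1 - t) * max (x - q) 0 + t * max (y - q) 0"
    by simp
qed

lemma convex_on_le_interpolation:
  fixes f :: "real \<Rightarrow> real"
  assumes f: "convex_on {a..b} f" and "a < mu" "mu < b" "t \<in> {a..b}"
  defines "s1 \<equiv> (f mu - f a) / (mu - a)" and "s2 \<equiv> (f b - f mu) / (b - mu)"
  shows "f t \<le> f mu + (s1 + s2) / 2 * (t - mu) + (s2 - s1) / 2 * \<bar>t - mu\<bar>"
proof (cases "t \<le> mu")
  case True
  have "convex_on {a..mu} f"
    using f by (rule convex_on_subset) (use assms in auto)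
  then have "f t \<le> s1 * (t - a) + f a"
    unfolding s1_def using True assms(4) by (intro convex_onD_Icc') auto
  also have "\<dots> = f mu + s1 * (t - mu)"
    using assms(2) by (simp add: s1_def field_simps)
  also have "\<dots> = f mu + (s1 + s2) / 2 * (t - mu) + (s2 - s1) / 2 * \<bar>t - mu\<bar>"
    using True by (simp add: abs_of_nonpos field_simps)
  finally show ?thesis .
next
  case False
  have "convex_on {mu..b} f"
    using f by (rule convex_on_subset) (use assms in auto)
  then have "f t \<le> (f mu - f b) / (b - mu) * (b - t) + f b"
    using False assms(4) by (intro convex_onD_Icc'') auto
  also have "\<dots> = f mu + s2 * (t - mu)"
    using assms(3) by (simp add: s2_def field_simps)
  also have "\<dots> = f mu + (s1 + s2) / 2 * (t - mu) + (s2 - s1) / 2 * \<bar>t - mu\<bar>"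
    using False by (simp add: field_simps)
  finally show ?thesis .
qed

lemma integral_convex_le_three_point:
  fixes P :: "'a measure" and X :: "'a \<Rightarrow> real" and f :: "real \<Rightarrow> real"
  assumes "prob_space P" and f: "convex_on {a..b} f" and "integrable P (\<lambda>x. f (X x))"
    and "integrable P X" "(\<integral>x. X x \<partial>P) = mu"
    and "integrable P (\<lambda>x. \<bar>X x - mu\<bar>)" "(\<integral>x. \<bar>X x - mu\<bar> \<partial>P) = delta"
    and "AE x in P. X x \<in> {a..b}" and "a < mu" "mu < b"
  shows "(\<integral>x. f (X x) \<partial>P) \<le> delta / (2 * (mu - a)) * f a
     + (1 - delta / (2 * (mu - a)) - delta / (2 * (b - mu))) * f mu
     + delta / (2 * (b - mu)) * f b"
proof -
  interpret prob_space P by fact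
  define s1 where "s1 = (f mu - f a) / (mu - a)"
  define s2 where "s2 = (f b - f mu) / (b - mu)"
  have lin: "integrable P (\<lambda>x. (s1 + s2) / 2 * (X x - mu))"
    and abs: "integrable P (\<lambda>x. (s2 - s1) / 2 * \<bar>X x - mu\<bar>)"
    using assms by auto
  have "AE x in P. f (X x) \<le> f mu + (s1 + s2) / 2 * (X x - mu) + (s2 - s1) / 2 * \<bar>X x - mu\<bar>"
    using assms(8) unfolding s1_def s2_def
    by eventually_elim (rule convex_on_le_interpolation[OF f assms(9,10)])
  then have "(\<integral>x. f (X x) \<partial>P) \<le>
        (\<integral>x. f mu + (s1 + s2) / 2 * (X x - mu) + (s2 - s1) / 2 * \<bar>X x - mu\<bar> \<partial>P)"
    using assms(3) lin abs by (intro integral_mono_AE) auto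
  also have "\<dots> = f mu + (s1 + s2) / 2 * (\<integral>x. X x - mu \<partial>P) + (s2 - s1) / 2 * delta"
    using lin abs assms(4,7) by (simp add: prob_space)
  also have "(\<integral>x. X x - mu \<partial>P) = 0"
    using assms(4,5) by (simp add: prob_space)
  also have "f mu + (s1 + s2) / 2 * 0 + (s2 - s1) / 2 * delta = f mu + s2 * delta / 2 - s1 * delta / 2"
    by (simp add: field_simps)
  also have "s1 * delta / 2 = delta / (2 * (mu - a)) * (f mu - f a)"
    using assms(9) by (simp add: s1_def field_simps)
  also have "s2 * delta / 2 = delta / (2 * (b - mu)) * (f b - f mu)"
    using assms(10) by (simp add: s2_def field_simps)
  finally show ?thesis
    by (simp add: algebra_simps diff_divide_distrib)
qed

definition three_point_pmf :: "real \<Rightarrow> real \<Rightarrow> real \<Rightarrow> real \<Rightarrow> real pmf" where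
  "three_point_pmf a mu b delta = pmf_of_list
     [(a, delta / (2 * (mu - a))),
      (mu, 1 - delta / (2 * (mu - a)) - delta / (2 * (b - mu))),
      (b, delta / (2 * (b - mu)))]"

context
  fixes a mu b delta :: real
  assumes a_mu: "a < mu" and mu_b: "mu < b" and delta_nonneg: "0 \<le> delta"
    and delta_le: "delta \<le> 2 * (b - mu) * (mu - a) / (b - a)"
begin

lemma three_point_weights_le_1: "delta / (2 * (mu - a)) + delta / (2 * (b - mu)) \<le> 1"
proof -
  define u v where "u = mu - a" and "v = b - mu"
  have "0 < u" "0 < v"
    using a_mu mu_b by (simp_all add: u_def v_def)
  moreover have "delta \<le> 2 * v * u / (v + u)"
    using delta_le by (simp add: u_def v_def)
  ultimately have "delta / (2 * u) + delta / (2 * v) \<le> 1"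
    by (simp add: field_simps)
  then show ?thesis
    by (simp add: u_def v_def)
qed

lemma pmf_of_list_wf_three_point:
  "pmf_of_list_wf [(a, delta / (2 * (mu - a))),
      (mu, 1 - delta / (2 * (mu - a)) - delta / (2 * (b - mu))),
      (b, delta / (2 * (b - mu)))]"
  using three_point_weights_le_1 a_mu mu_b delta_nonneg by (intro pmf_of_list_wfI) auto

lemma pmf_three_point_pmf:
  "pmf (three_point_pmf a mu b delta) a = delta / (2 * (mu - a))"
  "pmf (three_point_pmf a mu b delta) mu = 1 - delta / (2 * (mu - a)) - delta / (2 * (b - mu))"
  "pmf (three_point_pmf a mu b delta) b = delta / (2 * (b - mu))"
  unfolding three_point_pmf_def pmf_pmf_of_list[OF pmf_of_list_wf_three_point]
  using a_mu mu_b by simp_all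

lemma set_pmf_three_point_pmf: "set_pmf (three_point_pmf a mu b delta) \<subseteq> {a, mu, b}"
  using set_pmf_of_list[OF pmf_of_list_wf_three_point] by (simp add: three_point_pmf_def)

lemma integral_three_point_pmf:
  "(\<integral>t. g t \<partial>three_point_pmf a mu b delta) =
     delta / (2 * (mu - a)) * g a
     + (1 - delta / (2 * (mu - a)) - delta / (2 * (b - mu))) * g mu
     + delta / (2 * (b - mu)) * g b"
proof -
  have "(\<integral>t. g t \<partial>three_point_pmf a mu b delta) = (\<Sum>t\<in>{a, mu, b}. g t * pmf (three_point_pmf a mu b delta) t)"
    using set_pmf_three_point_pmf by (intro integral_measure_pmf_real) auto
  then show ?thesis
    using a_mu mu_b by (simp add: pmf_three_point_pmf algebra_simps)
qed

lemma three_point_weight_left: "delta / (2 * (mu - a)) * (mu - a) = delta / 2"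
  using a_mu by (simp add: field_simps)

lemma three_point_weight_right: "delta / (2 * (b - mu)) * (b - mu) = delta / 2"
  using mu_b by (simp add: field_simps)

lemma mean_three_point_pmf: "(\<integral>t. t \<partial>three_point_pmf a mu b delta) = mu"
proof -
  have regroup: "p1 * a + (1 - p1 - p3) * mu + p3 * b = mu - p1 * (mu - a) + p3 * (b - mu)"
    for p1 p3 :: real
    by (simp add: algebra_simps)
  show ?thesis
    unfolding integral_three_point_pmf regroup three_point_weight_left three_point_weight_right
    by simp
qed

lemma mean_abs_dev_three_point_pmf: "(\<integral>t. \<bar>t - mu\<bar> \<partial>three_point_pmf a mu b delta) = delta"
proof -
  have abs_dev: "\<bar>a - mu\<bar> = mu - a" "\<bar>b - mu\<bar> = b - mu"
    using a_mu mu_b by simp_all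
  show ?thesis
    unfolding integral_three_point_pmf abs_dev three_point_weight_left three_point_weight_right
    by simp
qed

end

definition vec_Pi_pmf :: "('n::finite \<Rightarrow> 'a pmf) \<Rightarrow> ('a ^ 'n) pmf" where
  "vec_Pi_pmf L = map_pmf vec_lambda (Pi_pmf UNIV undefined L)"

lemma map_pmf_vec_nth_vec_Pi_pmf: "map_pmf (\<lambda>x. x $ i) (vec_Pi_pmf L) = L i"
  by (simp add: vec_Pi_pmf_def map_pmf_comp Pi_pmf_component)

text \<open>\<^const>\<open>measure_pmf\<close> makes every set measurable, whereas \<^const>\<open>ambig_set\<close> asks for the
  Borel \<sigma>-algebra.\<close>

definition borel_pmf :: "'a::topological_space pmf \<Rightarrow> 'a measure" where
  "borel_pmf Q = distr (measure_pmf Q) borel id"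

lemma prob_space_borel_pmf: "prob_space (borel_pmf Q)"
  unfolding borel_pmf_def by (rule measure_pmf.prob_space_distr) simp

lemma sets_borel_pmf [simp]: "sets (borel_pmf Q) = sets borel"
  by (simp add: borel_pmf_def)

lemma integral_borel_pmf:
  fixes g :: "'a::topological_space \<Rightarrow> 'b::{banach, second_countable_topology}"
  assumes "g \<in> borel_measurable borel"
  shows "(\<integral>x. g x \<partial>borel_pmf Q) = (\<integral>x. g x \<partial>measure_pmf Q)"
  unfolding borel_pmf_def using assms by (subst integral_distr) auto

lemma integrable_borel_pmf_iff:
  fixes g :: "'a::topological_space \<Rightarrow> 'b::{banach, second_countable_topology}"
  assumes "g \<in> borel_measurable borel"
  shows "integrable (borel_pmf Q) g \<longleftrightarrow> integrable (measure_pmf Q) g"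
  unfolding borel_pmf_def using assms by (subst integrable_distr_eq) auto

lemma measure_borel_pmf: "A \<in> sets borel \<Longrightarrow> measure (borel_pmf Q) A = measure_pmf.prob Q A"
  unfolding borel_pmf_def by (subst measure_distr) auto

lemma AE_borel_pmfI:
  assumes "Measurable.pred borel P" "\<And>x. x \<in> set_pmf Q \<Longrightarrow> P x"
  shows "AE x in borel_pmf Q. P x"
  unfolding borel_pmf_def using assms by (subst AE_distr_iff) (auto intro: AE_pmfI)

lemma borel_measurable_vec_nth [measurable]:
  "(\<lambda>x::'a::topological_space ^ 'n::finite. x $ i) \<in> borel_measurable borel"
  by (rule borel_measurableI) (simp add: open_vimage_vec_nth)

lemma integral_vec_nth_borel_pmf:
  fixes Q :: "('a::topological_space ^ 'n::finite) pmf" and g :: "'a \<Rightarrow> real"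
  assumes "g \<in> borel_measurable borel"
  shows "(\<integral>x. g (x $ i) \<partial>borel_pmf Q) = (\<integral>t. g t \<partial>map_pmf (\<lambda>x. x $ i) Q)"
proof -
  have "(\<lambda>x. g (x $ i)) \<in> borel_measurable borel"
    using assms by measurable
  then show ?thesis
    by (simp add: integral_borel_pmf)
qed

lemma integrable_vec_nth_borel_pmf:
  fixes Q :: "('a::topological_space ^ 'n::finite) pmf" and g :: "'a \<Rightarrow> real"
  assumes "g \<in> borel_measurable borel" and "finite (set_pmf (map_pmf (\<lambda>x. x $ i) Q))"
  shows "integrable (borel_pmf Q) (\<lambda>x. g (x $ i))"
proof -
  have "integrable (map_pmf (\<lambda>x. x $ i) Q) g"
    using assms(2) by (rule integrable_measure_pmf_finite)
  moreover have "(\<lambda>x. g (x $ i)) \<in> borel_measurable borel"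
    using assms(1) by measurable
  ultimately show ?thesis
    by (simp add: integrable_borel_pmf_iff)
qed

lemma borel_pmf_in_ambig_set:
  fixes Q :: "(real ^ 'n::finite) pmf"
  assumes "\<And>i. finite (set_pmf (map_pmf (\<lambda>x. x $ i) Q))"
    and "\<And>i. set_pmf (map_pmf (\<lambda>x. x $ i) Q) \<subseteq> {a i..b i}"
    and "\<And>i. (\<integral>t. t \<partial>map_pmf (\<lambda>x. x $ i) Q) = mu i"
    and "\<And>i. (\<integral>t. \<bar>t - mu i\<bar> \<partial>map_pmf (\<lambda>x. x $ i) Q) = delta i"
  shows "borel_pmf Q \<in> ambig_set a mu b delta"
  unfolding ambig_set_def
proof (intro CollectI conjI allI prob_space_borel_pmf sets_borel_pmf)
  fix i
  show "integrable (borel_pmf Q) (\<lambda>x. x $ i)"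
    using integrable_vec_nth_borel_pmf[where g="\<lambda>t. t", OF _ assms(1)] by simp
  show "integrable (borel_pmf Q) (\<lambda>x. \<bar>x $ i - mu i\<bar>)"
    using integrable_vec_nth_borel_pmf[where g="\<lambda>t. \<bar>t - mu i\<bar>", OF _ assms(1)] by simp
  show "(\<integral>x. x $ i \<partial>borel_pmf Q) = mu i"
    using integral_vec_nth_borel_pmf[where g="\<lambda>t. t" and Q=Q and i=i] assms(3) by simp
  show "(\<integral>x. \<bar>x $ i - mu i\<bar> \<partial>borel_pmf Q) = delta i"
    using integral_vec_nth_borel_pmf[where g="\<lambda>t. \<bar>t - mu i\<bar>" and Q=Q and i=i] assms(4) by simp
  show "AE x in borel_pmf Q. a i \<le> x $ i \<and> x $ i \<le> b i"
    using assms(2)[of i] by (intro AE_borel_pmfI) (auto simp: image_subset_iff)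
qed

lemma measure_vec_nth_eq_borel_pmf:
  fixes Q :: "(real ^ 'n::finite) pmf"
  shows "measure (borel_pmf Q) {x. x $ i = t} = pmf (map_pmf (\<lambda>x. x $ i) Q) t"
proof -
  have "{x::real ^ 'n. x $ i = t} \<in> sets borel"
    by measurable
  then show ?thesis
    by (simp add: measure_borel_pmf pmf_map vimage_def)
qed

lemma integral_convex_vec_nth_le_three_point_marginal:
  fixes P :: "(real ^ 'n::finite) measure" and Q :: "(real ^ 'n) pmf" and f :: "real \<Rightarrow> real"
  assumes P: "P \<in> ambig_set a mu b delta"
    and three_point: "a i < mu i" "mu i < b i" "0 \<le> delta i"
      "delta i \<le> 2 * (b i - mu i) * (mu i - a i) / (b i - a i)"
    and marginal: "map_pmf (\<lambda>x. x $ i) Q = three_point_pmf (a i) (mu i) (b i) (delta i)"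
    and f: "convex_on {a i..b i} f" "f \<in> borel_measurable borel" "integrable P (\<lambda>x. f (x $ i))"
  shows "(\<integral>x. f (x $ i) \<partial>P) \<le> (\<integral>x. f (x $ i) \<partial>borel_pmf Q)"
proof -
  have "(\<integral>x. f (x $ i) \<partial>P) \<le> delta i / (2 * (mu i - a i)) * f (a i)
     + (1 - delta i / (2 * (mu i - a i)) - delta i / (2 * (b i - mu i))) * f (mu i)
     + delta i / (2 * (b i - mu i)) * f (b i)"
    using P f(1,3) three_point(1,2) unfolding ambig_set_def
    by (intro integral_convex_le_three_point) auto
  also have "\<dots> = (\<integral>t. f t \<partial>three_point_pmf (a i) (mu i) (b i) (delta i))"
    using three_point by (rule integral_three_point_pmf[symmetric])
  also have "\<dots> = (\<integral>x. f (x $ i) \<partial>borel_pmf Q)"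
    using f(2) by (simp add: integral_vec_nth_borel_pmf marginal)
  finally show ?thesis .
qed

lemma integral_Gcost:
  fixes P :: "(real ^ 'n::finite) measure"
  assumes "prob_space P" and "\<And>i. integrable P (\<lambda>x. x $ i)"
  shows "(\<integral>x. Gcost c m d q x \<partial>P) = (\<Sum>i\<in>UNIV. c i * (d i * (q $ i - (\<integral>x. x $ i \<partial>P))
           + (m i + d i) * (\<integral>x. max (x $ i - q $ i) 0 \<partial>P)))"
proof -
  interpret prob_space P by fact
  have "integrable P (\<lambda>x. max (x $ i - q $ i) 0)" for i
    using assms(2) by auto
  then show ?thesis
    unfolding Gcost_def using assms(2) by (simp add: prob_space)
qed

lemma integral_Gcost_le:
  fixes P P' :: "(real ^ 'n::finite) measure"
  assumes "prob_space P" "prob_space P'"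
    and "\<And>i. integrable P (\<lambda>x. x $ i)" "\<And>i. integrable P' (\<lambda>x. x $ i)"
    and "\<And>i. (\<integral>x. x $ i \<partial>P) = (\<integral>x. x $ i \<partial>P')"
    and "\<And>i. 0 \<le> c i" "\<And>i. 0 \<le> m i + d i"
    and "\<And>i. (\<integral>x. max (x $ i - q $ i) 0 \<partial>P) \<le> (\<integral>x. max (x $ i - q $ i) 0 \<partial>P')"
  shows "(\<integral>x. Gcost c m d q x \<partial>P) \<le> (\<integral>x. Gcost c m d q x \<partial>P')"
  unfolding integral_Gcost[OF assms(1,3)] integral_Gcost[OF assms(2,4)] assms(5)
  using assms(6-8) by (intro sum_mono mult_left_mono add_left_mono) auto

theorem lemma2:
  fixes c m d a mu b delta :: "'n::finite \<Rightarrow> real" and q :: "real ^ 'n"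
  assumes "\<And>i. c i > 0" and "\<And>i. m i > 0" and "\<And>i. d i > 0"
    and "\<And>i. 0 \<le> a i" and "\<And>i. a i < mu i" and "\<And>i. mu i < b i"
    and "\<And>i. 0 < delta i"
    and "\<And>i. delta i \<le> 2 * (b i - mu i) * (mu i - a i) / (b i - a i)"
  shows "\<exists>Pstar \<in> ambig_set a mu b delta.
           (\<forall>i. measure Pstar {x. x $ i = a i} = delta i / (2 * (mu i - a i)) \<and>
                measure Pstar {x. x $ i = mu i} =
                  1 - delta i / (2 * (mu i - a i)) - delta i / (2 * (b i - mu i)) \<and>
                measure Pstar {x. x $ i = b i} = delta i / (2 * (b i - mu i))) \<and>
           (\<forall>P \<in> ambig_set a mu b delta.
              (\<integral>x. Gcost c m d q x \<partial>P) \<le> (\<integral>x. Gcost c m d q x \<partial>Pstar))"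
proof -
  define L where "L i = three_point_pmf (a i) (mu i) (b i) (delta i)" for i
  define Pstar where "Pstar = borel_pmf (vec_Pi_pmf L)"
  note three_point = assms(5,6) less_imp_le[OF assms(7)] assms(8)
  note marginal = map_pmf_vec_nth_vec_Pi_pmf[of _ L]
  have set_L: "set_pmf (L i) \<subseteq> {a i..b i}" "finite (set_pmf (L i))" for i
    using set_pmf_three_point_pmf[OF three_point[of i]] assms(5,6)[of i]
    by (auto simp: L_def intro: finite_subset)
  have Pstar_admissible: "Pstar \<in> ambig_set a mu b delta"
    unfolding Pstar_def using set_L
    by (intro borel_pmf_in_ambig_set)
      (simp_all add: marginal L_def mean_three_point_pmf[OF three_point]
        mean_abs_dev_three_point_pmf[OF three_point])
  have "(\<integral>x. max (x $ i - q $ i) 0 \<partial>P) \<le> (\<integral>x. max (x $ i - q $ i) 0 \<partial>Pstar)"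
    if "P \<in> ambig_set a mu b delta" for P i
    unfolding Pstar_def
  proof (rule integral_convex_vec_nth_le_three_point_marginal[OF that three_point[of i]])
    interpret prob_space P
      using that by (simp add: ambig_set_def)
    show "integrable P (\<lambda>x. max (x $ i - q $ i) 0)"
      using that by (auto simp: ambig_set_def)
  qed (simp_all add: marginal L_def convex_on_max_diff_zero)
  then show ?thesis
    using Pstar_admissible assms(1-3) unfolding ambig_set_def
    by (auto simp: Pstar_def measure_vec_nth_eq_borel_pmf marginal L_def
        pmf_three_point_pmf[OF three_point] less_imp_le intro!: bexI[of _ Pstar] integral_Gcost_le)
qed

end
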